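(* Let $S:\mathbb{R}^n\to\mathbb{R}^n$ be nonexpansive (i.e. $\|Su-Sv\|\le\|u-v\|$ for all $u,v$) and suppose $S$ has a fixed point $w^\star$, i.e. $Sw^\star=w^\star$. Let $w^1\in\mathbb{R}^n$ and define the sequence $\{w^k\}$ by $w^{k+1}=\tfrac12 w^k+\tfrac12 Sw^k$ for $k\ge 1$. Then for every integer $N\ge 1$, $$\left\|\tfrac12 Sw^N-\tfrac12 w^N\right\|^2\le \frac{(N-1)^{N-1}}{N^N}\,\|w^1-w^\star\|^2,$$ with the convention $0^0=1$. *)

theory Defs
  imports "HOL-Analysis.Analysis"
begin

end

theory Submission
  imports Defs
begin

(* With x k = w k - w* and g k = x k - x (k+1) (half the fixed-point residual at w k), firm
   nonexpansiveness of the averaged map (1/2)(I + S) gives <g k, x (k+1)> >= 0 and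
   <g k - g (k+1), g (k+1)> >= 0. To bound g m, consider the quadratic form
     Phi k = (m - k) |x (k+1)|^2 + 2 (k+1) <x (k+1), g k> + (k+1) m |g k|^2.
   For k + 2 <= m, the difference m Phi k - (m+1) Phi (k+1) is a nonnegative combination of
   these two inner products plus a square, so Phi decays by the factor m/(m+1) per step.
   Together with Phi 0 <= m |x 0|^2 and (m+1)^2 |g m|^2 <= Phi (m-1) this gives
   |g m|^2 <= m^m / (m+1)^(m+1) |x 0|^2. *)

lemma nonexpansive_residual_inner_nonneg:
  fixes S :: "'a::real_inner \<Rightarrow> 'a"
  assumes "norm (S u - S v) \<le> norm (u - v)"
  shows "0 \<le> ((u - S u) - (v - S v)) \<bullet> ((u + S u) - (v + S v))"
proof -
  have "((u - S u) - (v - S v)) \<bullet> ((u + S u) - (v + S v))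
      = (norm (u - v))\<^sup>2 - (norm (S u - S v))\<^sup>2"
    by (simp add: power2_norm_eq_inner inner_commute algebra_simps)
  with assms show ?thesis
    by (simp add: power_mono)
qed

definition lyapunov :: "real \<Rightarrow> real \<Rightarrow> 'a::real_inner \<Rightarrow> 'a \<Rightarrow> real" where
  "lyapunov m k y g = (m - k) * (y \<bullet> y) + 2 * (k + 1) * (y \<bullet> g) + (k + 1) * m * (g \<bullet> g)"

lemma lyapunov_initial_le:
  fixes y g :: "'a::real_inner"
  assumes "1 \<le> m" and "0 \<le> g \<bullet> y"
  shows "lyapunov m 0 y g \<le> m * ((y + g) \<bullet> (y + g))"
proof -
  have "m * ((y + g) \<bullet> (y + g)) - lyapunov m 0 y g = 2 * (m - 1) * (g \<bullet> y)"
    by (simp add: lyapunov_def inner_commute algebra_simps)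
  moreover have "0 \<le> 2 * (m - 1) * (g \<bullet> y)"
    using assms by simp
  ultimately show ?thesis
    by linarith
qed

lemma lyapunov_contracts:
  fixes y g h :: "'a::real_inner"
  assumes "0 \<le> k" and "k + 2 \<le> m" and "0 \<le> h \<bullet> (y - h)" and "0 \<le> (g - h) \<bullet> h"
  shows "(m + 1) * lyapunov m (k + 1) (y - h) h \<le> m * lyapunov m k y g"
proof -
  let ?z = "(m + 1) *\<^sub>R h - y - m *\<^sub>R g"
  have "m * lyapunov m k y g - (m + 1) * lyapunov m (k + 1) (y - h) h
      = (m + 1) * (2 * (m - 2 - k) * (h \<bullet> (y - h)) + 2 * (k + 1) * m * ((g - h) \<bullet> h))
        + (k + 1) * (?z \<bullet> ?z)"
    by (simp add: lyapunov_def inner_commute[of h y]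
        inner_commute[of h g] inner_commute[of g y] algebra_simps)
  moreover have "0 \<le> (m + 1) * (2 * (m - 2 - k) * (h \<bullet> (y - h)) + 2 * (k + 1) * m * ((g - h) \<bullet> h))"
    using assms by simp
  moreover have "0 \<le> (k + 1) * (?z \<bullet> ?z)"
    using assms by simp
  ultimately show ?thesis
    by linarith
qed

lemma lyapunov_final_ge:
  fixes y g h :: "'a::real_inner"
  assumes "0 \<le> m" and "0 \<le> h \<bullet> (y - h)" and "0 \<le> (g - h) \<bullet> h"
  shows "(m + 1)\<^sup>2 * (h \<bullet> h) \<le> lyapunov m (m - 1) y g"
proof -
  let ?z = "y + m *\<^sub>R g - (m + 1) *\<^sub>R h"
  have "lyapunov m (m - 1) y g - (m + 1)\<^sup>2 * (h \<bullet> h)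
      = 2 * (m + 1) * (h \<bullet> (y - h)) + 2 * (m + 1) * m * ((g - h) \<bullet> h) + ?z \<bullet> ?z"
    by (simp add: lyapunov_def inner_commute[of h y]
        inner_commute[of h g] inner_commute[of g y] algebra_simps power2_eq_square)
  moreover have "0 \<le> 2 * (m + 1) * (h \<bullet> (y - h)) + 2 * (m + 1) * m * ((g - h) \<bullet> h)"
    using assms by simp
  ultimately show ?thesis
    using inner_ge_zero[of ?z] by linarith
qed

lemma step_norm_rate:
  fixes x :: "nat \<Rightarrow> 'a::real_inner"
  assumes step_towards_origin: "\<And>k. 0 \<le> (x k - x (Suc k)) \<bullet> x (Suc k)"
    and steps_monotone: "\<And>k. 0 \<le> ((x k - x (Suc k)) - (x (Suc k) - x (Suc (Suc k))))
                              \<bullet> (x (Suc k) - x (Suc (Suc k)))"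
  shows "(norm (x N - x (Suc N)))\<^sup>2 \<le> real N ^ N / real (Suc N) ^ Suc N * (norm (x 0))\<^sup>2"
proof -
  define g where "g k = x k - x (Suc k)" for k
  have x_Suc: "x (Suc k) = x k - g k" for k
    by (simp add: g_def)
  have x_0: "x 0 = x (Suc 0) + g 0"
    by (simp add: g_def)
  have towards_g: "0 \<le> g k \<bullet> x (Suc k)" for k
    using step_towards_origin[of k] by (simp add: g_def)
  have monotone_g: "0 \<le> (g k - g (Suc k)) \<bullet> g (Suc k)" for k
    using steps_monotone[of k] by (simp add: g_def)
  show ?thesis
  proof (cases N)
    case 0
    have "x 0 \<bullet> x 0 = g 0 \<bullet> g 0 + 2 * (g 0 \<bullet> x (Suc 0)) + x (Suc 0) \<bullet> x (Suc 0)"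
      unfolding x_0 by (simp add: inner_add_left inner_add_right inner_commute)
    then have "g 0 \<bullet> g 0 \<le> x 0 \<bullet> x 0"
      using towards_g[of 0] inner_ge_zero[of "x (Suc 0)"] by linarith
    with 0 show ?thesis
      by (simp add: g_def power2_norm_eq_inner)
  next
    case (Suc M)
    define m where "m = real N"
    define \<Phi> where "\<Phi> k = lyapunov m (real k) (x (Suc k)) (g k)" for k
    have m1: "1 \<le> m"
      using Suc by (simp add: m_def)
    have iterate: "(m + 1) ^ j * \<Phi> j \<le> m ^ j * \<Phi> 0" if "j \<le> M" for j
      using that
    proof (induction j)
      case (Suc j)
      have "(m + 1) * \<Phi> (Suc j) \<le> m * \<Phi> j"
        using lyapunov_contracts[where k = "real j" and m = m and y = "x (Suc j)" and g = "g j"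
            and h = "g (Suc j)"] Suc.prems \<open>N = Suc M\<close> towards_g[of "Suc j"] monotone_g
        by (simp add: \<Phi>_def x_Suc[of "Suc j"] m_def add.commute)
      then have "(m + 1) ^ Suc j * \<Phi> (Suc j) \<le> (m + 1) ^ j * (m * \<Phi> j)"
        using m1 by (simp add: mult_left_mono)
      also have "\<dots> \<le> m * (m ^ j * \<Phi> 0)"
        using Suc m1 by (simp add: mult_left_mono mult.left_commute)
      finally show ?case
        by simp
    qed simp
    have "(m + 1)\<^sup>2 * (g N \<bullet> g N) \<le> \<Phi> M"
      using lyapunov_final_ge[where m = m and h = "g N" and y = "x N" and g = "g M"]
        m1 towards_g[of N, unfolded x_Suc] monotone_g[of M]
      by (simp add: \<Phi>_def \<open>N = Suc M\<close> m_def)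
    then have "(m + 1) ^ M * ((m + 1)\<^sup>2 * (g N \<bullet> g N)) \<le> (m + 1) ^ M * \<Phi> M"
      using m1 by (intro mult_left_mono) simp_all
    also have "\<dots> \<le> m ^ M * \<Phi> 0"
      using iterate by simp
    also have "\<dots> \<le> m ^ M * (m * (x 0 \<bullet> x 0))"
      using lyapunov_initial_le[OF m1, of "g 0" "x (Suc 0)"] towards_g[of 0] m1
      by (intro mult_left_mono) (simp_all add: \<Phi>_def x_0[symmetric])
    finally have "(m + 1) ^ Suc N * (g N \<bullet> g N) \<le> m ^ N * (x 0 \<bullet> x 0)"
      by (simp add: \<open>N = Suc M\<close> power2_eq_square mult_ac)
    then have "g N \<bullet> g N \<le> m ^ N * (x 0 \<bullet> x 0) / (m + 1) ^ Suc N"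
      using m1 by (simp add: pos_le_divide_eq mult.commute del: power_Suc)
    then show ?thesis
      by (simp add: g_def m_def power2_norm_eq_inner add.commute del: power_Suc)
  qed
qed

lemma averaged_iteration_step_norm_rate:
  fixes S :: "'a::real_inner \<Rightarrow> 'a" and w :: "nat \<Rightarrow> 'a"
  assumes nonexp: "\<And>u v. norm (S u - S v) \<le> norm (u - v)"
    and fixpt: "S p = p"
    and iter: "\<And>k. w (Suc k) = (1/2) *\<^sub>R w k + (1/2) *\<^sub>R S (w k)"
  shows "(norm ((1/2) *\<^sub>R S (w N) - (1/2) *\<^sub>R w N))\<^sup>2
           \<le> real N ^ N / real (Suc N) ^ Suc N * (norm (w 0 - p))\<^sup>2"
proof -
  define x where "x k = w k - p" for k
  have step: "x k - x (Suc k) = (1/2) *\<^sub>R (w k - S (w k))" for k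
    by (simp add: x_def iter algebra_simps) (metis scaleR_add_right scaleR_half_double)
  have step_towards_origin_eq: "(x k - x (Suc k)) \<bullet> x (Suc k)
      = (1/4) * (((w k - S (w k)) - (p - S p)) \<bullet> ((w k + S (w k)) - (p + S p)))" for k
    by (simp add: x_def iter fixpt inner_commute algebra_simps)
  have steps_monotone_eq: "((x k - x (Suc k)) - (x (Suc k) - x (Suc (Suc k)))) \<bullet> (x (Suc k) - x (Suc (Suc k)))
      = (1/4) * (((w k - S (w k)) - (w (Suc k) - S (w (Suc k))))
                 \<bullet> ((w k + S (w k)) - (w (Suc k) + S (w (Suc k)))))" for k
    unfolding step by (simp add: iter[of k] inner_commute algebra_simps)
  have "(norm (x N - x (Suc N)))\<^sup>2 \<le> real N ^ N / real (Suc N) ^ Suc N * (norm (x 0))\<^sup>2"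
    by (rule step_norm_rate) (simp_all add: step_towards_origin_eq steps_monotone_eq nonexpansive_residual_inner_nonneg nonexp)
  then show ?thesis
    unfolding step by (simp add: x_def norm_minus_commute scaleR_diff_right)
qed

theorem theorem1:
  fixes S :: "real ^ 'n \<Rightarrow> real ^ 'n"
    and w :: "nat \<Rightarrow> real ^ 'n"
    and wstar :: "real ^ 'n"
    and N :: nat
  assumes nonexp: "\<And>u v. norm (S u - S v) \<le> norm (u - v)"
    and fixpt: "S wstar = wstar"
    and rec: "\<And>k. k \<ge> 1 \<Longrightarrow> w (Suc k) = (1/2) *\<^sub>R w k + (1/2) *\<^sub>R S (w k)"
    and N: "N \<ge> 1"
  shows "(norm ((1/2) *\<^sub>R S (w N) - (1/2) *\<^sub>R w N))\<^sup>2
           \<le> (real ((N - 1) ^ (N - 1)) / real (N ^ N)) * (norm (w 1 - wstar))\<^sup>2"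
proof -
  obtain M where M: "N = Suc M"
    using N by (cases N) auto
  have "(norm ((1/2) *\<^sub>R S (w (Suc M)) - (1/2) *\<^sub>R w (Suc M)))\<^sup>2
          \<le> real M ^ M / real (Suc M) ^ Suc M * (norm (w (Suc 0) - wstar))\<^sup>2"
    using averaged_iteration_step_norm_rate[where w = "\<lambda>k. w (Suc k)", OF nonexp fixpt] rec
    by simp
  then show ?thesis
    by (simp add: M del: power_Suc)
qed

end
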